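(* For every integer $m\ge 0$, \[ {}_{H}w_{m+1}(x)=w_{m+1}(x)+m\,x\,w_{m}(x)+(1+x)\sum_{k=0}^{m-2}\binom{m}{k}w_{m-k-1}(x)\,w_{k+1}(x) \] (empty sums being $0$). Moreover, for every integer $n\ge 2$, \[ \frac{x}{1+x}\sum_{k=0}^{n}\binom{n}{k}\,{}_{H}w_{k+1}(x)={}_{H}w_{n+1}(x)-{}_{H}w_{n}(x)-w_{n}(x)+w_{n-1}(x). \]
   Context: $\genfrac{\{}{\}}{0pt}{}{n}{k}$ denotes the Stirling numbers of the second kind. The geometric polynomials are $w_n(x)=\sum_{k=0}^{n}\genfrac{\{}{\}}{0pt}{}{n}{k}k!\,x^k$. With $H_k=\sum_{i=1}^k 1/i$, the harmonic geometric polynomials are ${}_{H}w_n(x)=\sum_{k=1}^{n}\genfrac{\{}{\}}{0pt}{}{n}{k}k!\,H_k\,x^k$. *)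

theory Defs
  imports "HOL-Analysis.Analysis" "HOL-Combinatorics.Stirling"
begin

definition geom_poly :: "nat \<Rightarrow> real \<Rightarrow> real" where
  "geom_poly n x = (\<Sum>k=0..n. real (Stirling n k) * fact k * x ^ k)"

definition harm_geom_poly :: "nat \<Rightarrow> real \<Rightarrow> real" where
  "harm_geom_poly n x = (\<Sum>k=1..n. real (Stirling n k) * fact k * harm k * x ^ k)"

end

theory Submission
  imports Defs "HOL-Computational_Algebra.Formal_Power_Series"
begin

(* Put u = x (e^t - 1) and l_n(x) = sum_k S(n,k) (k-1)! x^k.  The exponential generating
   functions of w_n, Hw_n and l_n are 1/(1 - u), -ln(1 - u)/(1 - u) and -ln(1 - u).
   Logarithms are avoided by working with coefficient identities instead:
   x sum_k C(n,k) w_k = (1 + x) w_n - [n = 0],  x sum_k C(n,k) Hw_k = (1 + x) Hw_n - l_n  and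
   l_(n+1) = (1 + x) w_n, all consequences of sum_k C(n,k) S(k,j) = S(n+1,j+1).
   They say W (1 - U) = 1, G (1 - U) = L and L' = W U' for the generating functions, so
   G = L W and G' = W' (1 + L); since L = (1 + x) (integral of W) - t, comparing coefficients
   gives the first identity.  The second one is the recurrence for Hw combined with Pascal's rule. *)

lemma sum_choose_Suc_split:
  fixes f :: "nat \<Rightarrow> 'a::comm_semiring_1"
  shows "(\<Sum>k\<le>Suc n. of_nat (Suc n choose k) * f k) =
         (\<Sum>k\<le>n. of_nat (n choose k) * f k) + (\<Sum>k\<le>n. of_nat (n choose k) * f (Suc k))"
proof -
  have "(\<Sum>k\<le>Suc n. of_nat (Suc n choose k) * f k) =
        f 0 + (\<Sum>k\<le>n. of_nat (n choose Suc k) * f (Suc k)) + (\<Sum>k\<le>n. of_nat (n choose k) * f (Suc k))"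
    by (subst sum.atMost_Suc_shift) (simp add: sum.distrib algebra_simps)
  also have "f 0 + (\<Sum>k\<le>n. of_nat (n choose Suc k) * f (Suc k)) = (\<Sum>k\<le>n. of_nat (n choose k) * f k)"
    using sum.atMost_Suc_shift[of "\<lambda>k. of_nat (n choose k) * f k" n] by (simp add: binomial_eq_0)
  finally show ?thesis .
qed

lemma sum_choose_Stirling: "(\<Sum>k\<le>n. (n choose k) * Stirling k j) = Stirling (Suc n) (Suc j)"
proof (induction n arbitrary: j)
  case 0
  then show ?case by (cases j) auto
next
  case (Suc n)
  have "(\<Sum>k\<le>Suc n. (Suc n choose k) * Stirling k j) =
     (\<Sum>k\<le>n. (n choose k) * Stirling k j) + (\<Sum>k\<le>n. (n choose k) * Stirling (Suc k) j)"
    using sum_choose_Suc_split[where f = "\<lambda>k. Stirling k j"] by simp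
  also have "\<dots> = Stirling (Suc (Suc n)) (Suc j)"
  proof (cases j)
    case 0
    have "(\<Sum>k\<le>n. (n choose k) * Stirling k 0) = 1"
      by (simp add: sum.atMost_shift)
    then show ?thesis by (simp add: 0 del: Stirling.simps(4))
  next
    case (Suc i)
    have "(\<Sum>k\<le>n. (n choose k) * Stirling (Suc k) j) =
      j * (\<Sum>k\<le>n. (n choose k) * Stirling k j) + (\<Sum>k\<le>n. (n choose k) * Stirling k i)"
      by (simp add: Suc sum.distrib sum_distrib_left algebra_simps)
    then show ?thesis
      using Suc.IH[of j] Suc.IH[of i] by (simp add: Suc)
  qed
  finally show ?case .
qed

definition stirling_transform :: "(nat \<Rightarrow> 'a::comm_semiring_1) \<Rightarrow> nat \<Rightarrow> 'a" where
  "stirling_transform a n = (\<Sum>j\<le>n. of_nat (Stirling n j) * a j)"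

lemma stirling_transform_cong:
  "(\<And>j. j \<le> n \<Longrightarrow> a j = b j) \<Longrightarrow> stirling_transform a n = stirling_transform b n"
  by (simp add: stirling_transform_def)

lemma stirling_transform_Suc:
  "stirling_transform a (Suc n) = stirling_transform (\<lambda>j. of_nat j * a j + a (Suc j)) n"
proof -
  have "stirling_transform a (Suc n) = (\<Sum>j\<le>n. of_nat (Stirling (Suc n) (Suc j)) * a (Suc j))"
    unfolding stirling_transform_def by (subst sum.atMost_Suc_shift) simp
  also have "\<dots> = (\<Sum>j\<le>Suc n. of_nat j * of_nat (Stirling n j) * a j)
                 + (\<Sum>j\<le>n. of_nat (Stirling n j) * a (Suc j))"
    by (subst sum.atMost_Suc_shift) (simp add: sum.distrib algebra_simps)
  also have "(\<Sum>j\<le>Suc n. of_nat j * of_nat (Stirling n j) * a j) =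
             (\<Sum>j\<le>n. of_nat j * of_nat (Stirling n j) * (a j :: 'a))"
    by simp
  finally show ?thesis
    unfolding stirling_transform_def by (simp add: sum.distrib algebra_simps)
qed

lemma binomial_transform_stirling_transform:
  "(\<Sum>k\<le>n. of_nat (n choose k) * stirling_transform a k) =
   stirling_transform (\<lambda>j. a j + of_nat j * a (j - 1)) n"
proof -
  have "(\<Sum>k\<le>n. of_nat (n choose k) * stirling_transform a k) =
        (\<Sum>k\<le>n. \<Sum>j\<le>n. of_nat (n choose k) * of_nat (Stirling k j) * a j)"
    unfolding stirling_transform_def sum_distrib_left mult.assoc
    by (intro sum.cong refl sum.mono_neutral_left) auto
  also have "\<dots> = (\<Sum>j\<le>n. of_nat (\<Sum>k\<le>n. (n choose k) * Stirling k j) * a j)"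
    by (subst sum.swap) (simp add: sum_distrib_right)
  also have "\<dots> = stirling_transform (\<lambda>j. if j = 0 then 0 else a (j - 1)) (Suc n)"
    unfolding stirling_transform_def sum_choose_Stirling
    by (subst sum.atMost_Suc_shift) (simp del: Stirling.simps)
  also have "\<dots> = stirling_transform (\<lambda>j. a j + of_nat j * a (j - 1)) n"
    unfolding stirling_transform_Suc by (intro stirling_transform_cong) (simp add: add.commute)
  finally show ?thesis .
qed

lemma stirling_transform_cmult:
  "c * stirling_transform a n = stirling_transform (\<lambda>j. c * a j) n"
  by (simp add: stirling_transform_def sum_distrib_left algebra_simps)

lemma stirling_transform_diff:
  fixes a b :: "nat \<Rightarrow> 'a::comm_ring_1"
  shows "stirling_transform (\<lambda>j. a j - b j) n = stirling_transform a n - stirling_transform b n"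
  by (simp add: stirling_transform_def sum_subtractf algebra_simps)

lemma stirling_transform_indicator_0:
  "stirling_transform (\<lambda>j. of_bool (j = 0)) n = of_bool (n = 0)"
  by (cases n) (simp_all add: stirling_transform_def sum.atMost_Suc_shift)

definition log_geom_poly :: "nat \<Rightarrow> real \<Rightarrow> real" where
  "log_geom_poly n x = (\<Sum>k=1..n. real (Stirling n k) * fact (k - 1) * x ^ k)"

lemma geom_poly_eq_stirling_transform:
  "geom_poly n x = stirling_transform (\<lambda>j. fact j * x ^ j) n"
  unfolding geom_poly_def stirling_transform_def by (simp add: atLeast0AtMost mult.assoc)

lemma geom_poly_0 [simp]: "geom_poly 0 x = 1"
  by (simp add: geom_poly_def)

lemma sum_from_1_eq_stirling_transform:
  fixes a :: "nat \<Rightarrow> 'a::comm_semiring_1"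
  assumes "a 0 = 0"
  shows "(\<Sum>k=1..n. of_nat (Stirling n k) * a k) = stirling_transform a n"
  unfolding stirling_transform_def atMost_atLeast0 using assms
  by (simp add: sum.atLeast_Suc_atMost)

lemma harm_geom_poly_eq_stirling_transform:
  "harm_geom_poly n x = stirling_transform (\<lambda>j. fact j * harm j * x ^ j) n"
  unfolding harm_geom_poly_def mult.assoc
  by (rule sum_from_1_eq_stirling_transform) (simp add: harm_def)

lemma log_geom_poly_eq_stirling_transform:
  "log_geom_poly n x = stirling_transform (\<lambda>j. if j = 0 then 0 else fact (j - 1) * x ^ j) n"
  unfolding log_geom_poly_def mult.assoc
  by (subst sum_from_1_eq_stirling_transform[symmetric]) (auto intro: sum.cong)

lemma log_geom_poly_0 [simp]: "log_geom_poly 0 x = 0"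
  by (simp add: log_geom_poly_def)

lemma geom_poly_binomial_recurrence:
  "x * (\<Sum>k\<le>n. real (n choose k) * geom_poly k x) = (1 + x) * geom_poly n x - of_bool (n = 0)"
proof -
  have "x * (\<Sum>k\<le>n. real (n choose k) * geom_poly k x) =
        stirling_transform (\<lambda>j. x * (fact j * x ^ j + real j * (fact (j - 1) * x ^ (j - 1)))) n"
    unfolding geom_poly_eq_stirling_transform binomial_transform_stirling_transform
    by (rule stirling_transform_cmult)
  also have "\<dots> = stirling_transform (\<lambda>j. (1 + x) * (fact j * x ^ j) - of_bool (j = 0)) n"
    by (intro stirling_transform_cong) (auto simp: algebra_simps fact_reduce power_eq_if)
  finally show ?thesis
    by (simp add: stirling_transform_diff stirling_transform_cmult stirling_transform_indicator_0
                  geom_poly_eq_stirling_transform)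
qed

lemma harm_geom_poly_binomial_recurrence:
  "x * (\<Sum>k\<le>n. real (n choose k) * harm_geom_poly k x) =
   (1 + x) * harm_geom_poly n x - log_geom_poly n x"
proof -
  have "x * (\<Sum>k\<le>n. real (n choose k) * harm_geom_poly k x) =
        stirling_transform (\<lambda>j. x * (fact j * harm j * x ^ j
                             + real j * (fact (j - 1) * harm (j - 1) * x ^ (j - 1)))) n"
    unfolding harm_geom_poly_eq_stirling_transform binomial_transform_stirling_transform
    by (rule stirling_transform_cmult)
  also have "\<dots> = stirling_transform (\<lambda>j. (1 + x) * (fact j * harm j * x ^ j)
                     - (if j = 0 then 0 else fact (j - 1) * x ^ j)) n"
  proof (intro stirling_transform_cong)
    fix j :: nat
    show "x * (fact j * harm j * x ^ j + real j * (fact (j - 1) * harm (j - 1) * x ^ (j - 1))) =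
          (1 + x) * (fact j * harm j * x ^ j) - (if j = 0 then 0 else fact (j - 1) * x ^ j)"
    proof (cases j)
      case (Suc i)
      have "fact (Suc i) * harm (Suc i) = fact (Suc i) * (harm i :: real) + fact i"
        by (simp add: harm_Suc field_simps)
      then show ?thesis using Suc by (simp add: algebra_simps)
    qed (simp add: harm_def)
  qed
  finally show ?thesis
    by (simp add: stirling_transform_diff stirling_transform_cmult
                  harm_geom_poly_eq_stirling_transform log_geom_poly_eq_stirling_transform)
qed

lemma log_geom_poly_Suc:
  "log_geom_poly (Suc n) x = (1 + x) * geom_poly n x - of_bool (n = 0)"
proof -
  have "log_geom_poly (Suc n) x =
        stirling_transform (\<lambda>j. real j * (if j = 0 then 0 else fact (j - 1) * x ^ j)
                                 + fact j * x ^ Suc j) n"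
    by (simp add: log_geom_poly_eq_stirling_transform stirling_transform_Suc)
  also have "\<dots> = stirling_transform (\<lambda>j. (1 + x) * (fact j * x ^ j) - of_bool (j = 0)) n"
    by (intro stirling_transform_cong) (auto simp: algebra_simps fact_reduce)
  finally show ?thesis
    by (simp add: stirling_transform_diff stirling_transform_cmult stirling_transform_indicator_0
                  geom_poly_eq_stirling_transform)
qed

unbundle no vec_syntax
notation fps_nth (infixl \<open>$\<close> 75)

definition egf :: "(nat \<Rightarrow> 'a::field_char_0) \<Rightarrow> 'a fps" where
  "egf a = Abs_fps (\<lambda>n. a n / fact n)"

lemma egf_nth [simp]: "egf a $ n = a n / fact n"
  by (simp add: egf_def)

lemma egf_eq_iff: "egf a = egf b \<longleftrightarrow> a = b"
  by (auto simp: fps_eq_iff)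

lemma egf_add: "egf a + egf b = egf (\<lambda>n. a n + b n)"
  by (simp add: fps_eq_iff add_divide_distrib)

lemma egf_diff: "egf a - egf b = egf (\<lambda>n. a n - b n)"
  by (simp add: fps_eq_iff diff_divide_distrib)

lemma fps_const_mult_egf: "fps_const c * egf a = egf (\<lambda>n. c * a n)"
  by (simp add: fps_eq_iff)

lemma one_eq_egf: "1 = egf (\<lambda>n. of_bool (n = 0))"
  by (simp add: fps_eq_iff)

lemma fps_X_eq_egf: "fps_X = egf (\<lambda>n. of_bool (n = 1))"
  by (simp add: fps_eq_iff)

lemma fps_exp_1_eq_egf: "fps_exp 1 = egf (\<lambda>_. 1)"
  by (simp add: fps_eq_iff)

lemma fps_deriv_egf: "fps_deriv (egf a) = egf (\<lambda>n. a (Suc n))"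
  by (simp add: fps_eq_iff field_simps del: of_nat_Suc)

lemma fps_X_mult_fps_deriv_egf: "fps_X * fps_deriv (egf a) = egf (\<lambda>n. of_nat n * a n)"
  by (auto simp: fps_eq_iff fps_X_mult_nth field_simps fact_reduce)

lemma egf_mult:
  "egf a * egf b = egf (\<lambda>n. \<Sum>k\<le>n. of_nat (n choose k) * a k * b (n - k))"
proof (rule fps_ext)
  fix n
  have "(egf a * egf b) $ n = (\<Sum>k\<le>n. a k / fact k * (b (n - k) / fact (n - k)))"
    by (simp add: fps_mult_nth atLeast0AtMost)
  also have "\<dots> = (\<Sum>k\<le>n. of_nat (n choose k) * a k * b (n - k) / fact n)"
    by (intro sum.cong refl) (simp add: binomial_fact)
  finally show "(egf a * egf b) $ n = egf (\<lambda>n. \<Sum>k\<le>n. of_nat (n choose k) * a k * b (n - k)) $ n"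
    by (simp add: sum_divide_distrib)
qed

lemma egf_mult_one_minus_exp:
  "egf a * (1 - fps_const c * (fps_exp 1 - 1)) =
   egf (\<lambda>n. (1 + c) * a n - c * (\<Sum>k\<le>n. of_nat (n choose k) * a k))"
proof -
  have "egf a * (1 - fps_const c * (fps_exp 1 - 1)) =
        fps_const (1 + c) * egf a - fps_const c * (egf a * egf (\<lambda>_. 1))"
    by (simp add: fps_exp_1_eq_egf algebra_simps flip: fps_const_add)
  then show ?thesis
    by (simp add: egf_mult fps_const_mult_egf egf_diff)
qed

(* Read W = 1/(1 - U), L = -ln(1 - U) and G = L/(1 - U). *)
lemma fps_deriv_log_over_one_minus:
  fixes W U L G :: "'a::comm_ring_1 fps"
  assumes inverse: "W * (1 - U) = 1"
    and quotient: "G * (1 - U) = L"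
    and log: "fps_deriv L = W * fps_deriv U"
  shows "fps_deriv G = fps_deriv W * (1 + L)"
proof -
  have "fps_deriv W * (1 - U) = W * fps_deriv U"
    using arg_cong[OF inverse, of fps_deriv] by (simp add: algebra_simps)
  then have deriv_W: "fps_deriv W = fps_deriv L * W"
    by (metis inverse log mult.assoc mult.commute mult_1_right)
  have "G = L * W"
    by (metis inverse quotient mult.assoc mult.commute mult_1_right)
  then show ?thesis
    by (simp add: deriv_W algebra_simps)
qed

lemma fps_deriv_egf_harm_geom_poly:
  fixes x :: real
  defines "W \<equiv> egf (\<lambda>n. geom_poly n x)"
  shows "fps_deriv (egf (\<lambda>n. harm_geom_poly n x)) =
         fps_deriv W * (1 + fps_const (1 + x) * egf (\<lambda>n. if n = 0 then 0 else geom_poly (n - 1) x)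
                        - fps_X)"
proof -
  let ?U = "fps_const x * (fps_exp 1 - 1)"
  have inverse: "W * (1 - ?U) = 1"
    unfolding W_def egf_mult_one_minus_exp geom_poly_binomial_recurrence by (simp add: one_eq_egf)
  have quotient: "egf (\<lambda>n. harm_geom_poly n x) * (1 - ?U) = egf (\<lambda>n. log_geom_poly n x)"
    unfolding egf_mult_one_minus_exp harm_geom_poly_binomial_recurrence by simp
  have "fps_deriv ?U = fps_const x * egf (\<lambda>_. 1)"
    by (simp add: fps_exp_1_eq_egf fps_deriv_egf)
  then have "W * fps_deriv ?U = fps_const x * (W * egf (\<lambda>_. 1))"
    by (simp only: mult.left_commute)
  also have "\<dots> = egf (\<lambda>n. x * (\<Sum>k\<le>n. real (n choose k) * geom_poly k x))"
    by (simp add: W_def egf_mult fps_const_mult_egf)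
  also have "\<dots> = fps_deriv (egf (\<lambda>n. log_geom_poly n x))"
    unfolding fps_deriv_egf geom_poly_binomial_recurrence log_geom_poly_Suc ..
  finally have log: "fps_deriv (egf (\<lambda>n. log_geom_poly n x)) = W * fps_deriv ?U" ..
  have "log_geom_poly n x = (1 + x) * (if n = 0 then 0 else geom_poly (n - 1) x) - of_bool (n = 1)"
    for n by (cases n) (simp_all add: log_geom_poly_Suc)
  then have "egf (\<lambda>n. log_geom_poly n x) =
             fps_const (1 + x) * egf (\<lambda>n. if n = 0 then 0 else geom_poly (n - 1) x) - fps_X"
    by (simp add: fps_const_mult_egf fps_X_eq_egf egf_diff)
  with fps_deriv_log_over_one_minus[OF inverse quotient log] show ?thesis
    by (simp add: algebra_simps)
qed

lemma harm_geom_poly_Suc_convolution: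
  fixes x :: real
  shows "harm_geom_poly (Suc m) x = geom_poly (Suc m) x
           + (1 + x) * (\<Sum>k\<le>m. real (m choose k) * geom_poly (Suc k) x
                                  * (if m - k = 0 then 0 else geom_poly (m - k - 1) x))
           - real m * geom_poly m x"
proof -
  let ?W = "egf (\<lambda>n. geom_poly n x)"
  let ?V = "egf (\<lambda>n. if n = 0 then 0 else geom_poly (n - 1) x)"
  have "fps_deriv (egf (\<lambda>n. harm_geom_poly n x)) =
        fps_deriv ?W + fps_const (1 + x) * (fps_deriv ?W * ?V) - fps_X * fps_deriv ?W"
    unfolding fps_deriv_egf_harm_geom_poly by (simp add: algebra_simps)
  then have "egf (\<lambda>m. harm_geom_poly (Suc m) x) =
             egf (\<lambda>m. geom_poly (Suc m) x
                + (1 + x) * (\<Sum>k\<le>m. real (m choose k) * geom_poly (Suc k) x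
                                       * (if m - k = 0 then 0 else geom_poly (m - k - 1) x))
                - real m * geom_poly m x)"
    unfolding fps_X_mult_fps_deriv_egf
    unfolding fps_deriv_egf egf_mult fps_const_mult_egf egf_add egf_diff by simp
  then show ?thesis
    unfolding egf_eq_iff by (rule fun_cong)
qed

lemma harm_geom_poly_Suc:
  fixes x :: real
  shows "harm_geom_poly (m + 1) x = geom_poly (m + 1) x + real m * x * geom_poly m x
           + (1 + x) * (\<Sum>k<m - 1. real (m choose k) * geom_poly (m - k - 1) x * geom_poly (k + 1) x)"
proof (cases m)
  case 0
  then show ?thesis
    using harm_geom_poly_Suc_convolution[of 0 x] by simp
next
  case (Suc p)
  have "(\<Sum>k\<le>Suc p. real (Suc p choose k) * geom_poly (Suc k) x
                       * (if Suc p - k = 0 then 0 else geom_poly (Suc p - k - 1) x)) =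
        (\<Sum>k<p. real (Suc p choose k) * geom_poly (Suc p - k - 1) x * geom_poly (k + 1) x)
        + real (Suc p) * geom_poly (Suc p) x"
    by (simp add: lessThan_Suc_atMost[symmetric] Suc_diff_le mult_ac)
  then show ?thesis
    using harm_geom_poly_Suc_convolution[of m x] Suc by (simp add: algebra_simps)
qed

lemma binomial_sum_harm_geom_poly_Suc:
  fixes x :: real
  assumes "2 \<le> n"
  shows "x * (\<Sum>k\<le>n. real (n choose k) * harm_geom_poly (Suc k) x) =
         (1 + x) * (harm_geom_poly (Suc n) x - harm_geom_poly n x - geom_poly n x + geom_poly (n - 1) x)"
proof -
  obtain p where p: "n = Suc (Suc p)"
    using assms by (metis add_2_eq_Suc le_Suc_ex)
  have "x * (\<Sum>k\<le>n. real (n choose k) * harm_geom_poly (Suc k) x) =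
        x * (\<Sum>k\<le>Suc n. real (Suc n choose k) * harm_geom_poly k x)
        - x * (\<Sum>k\<le>n. real (n choose k) * harm_geom_poly k x)"
    by (simp only: sum_choose_Suc_split) (simp add: algebra_simps)
  also have "\<dots> = (1 + x) * harm_geom_poly (Suc n) x - log_geom_poly (Suc n) x
                   - ((1 + x) * harm_geom_poly n x - log_geom_poly n x)"
    by (simp only: harm_geom_poly_binomial_recurrence)
  also have "\<dots> = (1 + x) * (harm_geom_poly (Suc n) x - harm_geom_poly n x - geom_poly n x + geom_poly (n - 1) x)"
    by (simp add: p log_geom_poly_Suc algebra_simps)
  finally show ?thesis .
qed

theorem proposition3:
  fixes x :: real
  shows "(\<forall>m::nat. harm_geom_poly (m + 1) x =
            geom_poly (m + 1) x + real m * x * geom_poly m x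
            + (1 + x) * (\<Sum>k<m - 1. real (m choose k) * geom_poly (m - k - 1) x * geom_poly (k + 1) x))
     \<and> (\<forall>n::nat. n \<ge> 2 \<longrightarrow> 1 + x \<noteq> 0 \<longrightarrow>
            x / (1 + x) * (\<Sum>k=0..n. real (n choose k) * harm_geom_poly (k + 1) x) =
            harm_geom_poly (n + 1) x - harm_geom_poly n x - geom_poly n x + geom_poly (n - 1) x)"
proof -
  have "x / (1 + x) * (\<Sum>k=0..n. real (n choose k) * harm_geom_poly (k + 1) x) =
        harm_geom_poly (n + 1) x - harm_geom_poly n x - geom_poly n x + geom_poly (n - 1) x"
    if "n \<ge> 2" and "1 + x \<noteq> 0" for n
    using binomial_sum_harm_geom_poly_Suc[OF \<open>n \<ge> 2\<close>, of x] \<open>1 + x \<noteq> 0\<close>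
    by (simp add: atLeast0AtMost field_simps)
  with harm_geom_poly_Suc show ?thesis
    by blast
qed

end
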